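(* Let $X\subseteq[U]$ be a set of $k$ keys. Let $p>4U^2$ be a prime and $m\le U$ a positive integer, and let $h(x)=((\sigma x+\tau)\bmod p)\bmod m$ where $\sigma,\tau\in[p]$ are chosen independently and uniformly at random. Fix a key $x\notin X$ and buckets $a,b\in[m]$, and let $F=\sum_{y\in X}[h(y)=b]$. Then $$\mathbb{E}(F\mid h(x)=a)=\mathbb{E}(F)=\frac{k}{m}\pm\Theta(1),$$ and for every $\lambda>0$, $$\Pr\big(|F-\mathbb{E}(F)|\ge\lambda\sqrt{\mathbb{E}(F)}\;\big|\;h(x)=a\big)\le O\!\left(\frac{U\log U}{\lambda^2k}\right).$$
   Context: $[N]=\{0,1,\dots,N-1\}$; $[P]$ for a proposition $P$ is the Iverson bracket (1 if $P$ holds, 0 otherwise). "$\frac km\pm\Theta(1)$" means that the difference $\mathbb{E}(F)-\frac km$ is bounded in absolute value by an absolute constant. The $O(\cdot)$ hides an absolute constant. *)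

theory Defs
  imports "HOL-Probability.Probability"
begin

definition hash_fn :: "nat \<Rightarrow> nat \<Rightarrow> nat \<times> nat \<Rightarrow> nat \<Rightarrow> nat" where
  "hash_fn p m st x = ((fst st * x + snd st) mod p) mod m"

definition seed_pmf :: "nat \<Rightarrow> (nat \<times> nat) pmf" where
  "seed_pmf p = pmf_of_set ({..<p} \<times> {..<p})"

definition bucket_load :: "nat \<Rightarrow> nat \<Rightarrow> nat set \<Rightarrow> nat \<Rightarrow> nat \<times> nat \<Rightarrow> real" where
  "bucket_load p m X b st = (\<Sum>y\<in>X. of_bool (hash_fn p m st y = b))"

end

theory Submission
  imports Defs
begin

text \<open>
  Write g(y) = (\<sigma> y + \<tau>) mod p, so that h(y) = b iff g(y) lies in the set B of residues
  below p that are congruent to b mod m; |B| = p/m \<plusminus> 1. For distinct keys the pair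
  (g(x), g(y)) is uniform on [p]^2, so conditioning on h(x) = a leaves the law of every
  single g(y) unchanged: this gives both expectation claims, with E F = k |B| / p.

  The second moment needs three keys. Since (y - z) g(x) + (z - x) g(y) + (x - y) g(z) is
  divisible by p, fixing g(x) forces g(y) = b + m j and g(z) = b + m l to satisfy
  \<beta> j + \<gamma> l \<in> S for a residue class S mod p, where \<beta> = z - x and \<gamma> = x - y. Those
  points of the box [|B|]^2 lie on few lines \<beta> j + \<gamma> l = s, each carrying about
  |B| gcd(\<beta>, \<gamma>) / max(|\<beta>|, |\<gamma>|) of them, so the count is
  |B|^2 / p + |B| gcd(\<beta>, \<gamma>) / max(|\<beta>|, |\<gamma>|) + O(U |B| / p + 1). The main term
  cancels against (E F)^2, and the sum of gcd(\<beta>, \<gamma>) / max(|\<beta>|, |\<gamma>|) over pairs of keys is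
  O(U log U); Chebyshev's inequality finishes the proof.
\<close>

section \<open>Lattice points of a box in a residue class\<close>

lemma card_le_of_pairwise_dvd_diff:
  fixes C :: "int set" and q lo hi :: int
  assumes q: "q > 0" and le: "lo \<le> hi" and sub: "C \<subseteq> {lo..hi}"
    and cong: "\<And>c c'. c \<in> C \<Longrightarrow> c' \<in> C \<Longrightarrow> q dvd c - c'"
  shows "real (card C) \<le> of_int (hi - lo) / of_int q + 1"
proof -
  define f where "f c = (c - lo) div q" for c
  have "inj_on f C"
  proof (rule inj_onI)
    fix c c' assume "c \<in> C" "c' \<in> C" "f c = f c'"
    moreover from cong[OF \<open>c \<in> C\<close> \<open>c' \<in> C\<close>] have "(c - lo) mod q = (c' - lo) mod q"
      by (simp add: mod_eq_dvd_iff)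
    moreover have "c - lo = f c * q + (c - lo) mod q" "c' - lo = f c' * q + (c' - lo) mod q"
      unfolding f_def by simp_all
    ultimately show "c = c'" by simp
  qed
  moreover have "f ` C \<subseteq> {0..(hi - lo) div q}"
  proof
    fix d assume "d \<in> f ` C"
    then obtain c where "c \<in> C" "d = f c" by blast
    with sub have "0 \<le> c - lo" "c - lo \<le> hi - lo" by auto
    with q show "d \<in> {0..(hi - lo) div q}"
      unfolding \<open>d = f c\<close> f_def by (simp add: zdiv_mono1 pos_imp_zdiv_nonneg_iff)
  qed
  ultimately have "card C \<le> card {0..(hi - lo) div q}"
    by (metis card_image card_mono finite_atLeastAtMost_int)
  moreover have "0 \<le> (hi - lo) div q" using le q by (simp add: pos_imp_zdiv_nonneg_iff)
  ultimately have "real (card C) \<le> of_int ((hi - lo) div q) + 1" by simp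
  also have "of_int ((hi - lo) div q) \<le> of_int (hi - lo) / (of_int q :: real)"
    by (rule real_of_int_div4)
  finally show ?thesis by simp
qed

lemma dvd_diff_of_same_line:
  fixes \<beta> \<gamma> j j' l l' :: int
  assumes \<gamma>: "\<gamma> \<noteq> 0" and line: "\<beta> * j + \<gamma> * l = \<beta> * j' + \<gamma> * l'"
  shows "\<bar>\<gamma>\<bar> div gcd \<beta> \<gamma> dvd j - j'"
proof -
  define g where "g = gcd \<beta> \<gamma>"
  have "g > 0" using \<gamma> unfolding g_def by simp
  have "\<gamma> = g * (\<gamma> div g)" "\<beta> = g * (\<beta> div g)" unfolding g_def by simp_all
  moreover have "\<gamma> * (l' - l) = \<beta> * (j - j')" using line by (simp add: algebra_simps)
  ultimately have "g * ((\<gamma> div g) * (l' - l)) = g * ((\<beta> div g) * (j - j'))"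
    by (metis mult.assoc)
  then have "(\<gamma> div g) dvd (\<beta> div g) * (j - j')"
    using \<open>g > 0\<close> by (metis dvd_triv_left mult_cancel_left less_irrefl)
  moreover have "coprime (\<gamma> div g) (\<beta> div g)"
    unfolding g_def using \<gamma> div_gcd_coprime[of \<gamma> \<beta>] by (simp add: gcd.commute)
  ultimately have "(\<gamma> div g) dvd j - j'" by (simp add: coprime_dvd_mult_right_iff)
  moreover have "\<bar>\<gamma>\<bar> div g = \<bar>\<gamma> div g\<bar>" unfolding g_def by (simp add: abs_div)
  ultimately show ?thesis unfolding g_def by simp
qed

text \<open>
  The first coordinates of the grid points on a line are congruent modulo
  |\<gamma>| / gcd(\<beta>, \<gamma>), and the interval they span lies in the window on the right.
\<close>

lemma card_line_fibre_le:
  fixes \<beta> \<gamma> s lo hi :: int and n :: nat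
  assumes \<gamma>: "\<gamma> \<noteq> 0" and range: "\<And>l. l < n \<Longrightarrow> \<gamma> * int l \<in> {lo..hi}"
  shows "real (card {j. j < n \<and> (\<exists>l<n. \<beta> * int j + \<gamma> * int l = s)})
    \<le> real (card {j. j < n \<and> s - \<beta> * int j \<in> {lo..hi}}) / of_int (\<bar>\<gamma>\<bar> div gcd \<beta> \<gamma>) + 1"
proof -
  define C where "C = {j. j < n \<and> (\<exists>l<n. \<beta> * int j + \<gamma> * int l = s)}"
  define J where "J = {j. j < n \<and> s - \<beta> * int j \<in> {lo..hi}}"
  define q where "q = \<bar>\<gamma>\<bar> div gcd \<beta> \<gamma>"
  have "\<bar>\<gamma>\<bar> = gcd \<beta> \<gamma> * q" unfolding q_def by simp
  then have "0 < gcd \<beta> \<gamma> * q" using \<gamma> zero_less_abs_iff by metis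
  then have q: "q > 0" using gcd_ge_0_int[of \<beta> \<gamma>] by (auto simp: zero_less_mult_iff)
  have CJ: "C \<subseteq> J" using range unfolding C_def J_def by (auto simp: algebra_simps)
  have cong: "q dvd int j - int j'" if jj: "j \<in> C" "j' \<in> C" for j j'
  proof -
    obtain l l' where "\<beta> * int j + \<gamma> * int l = s" "\<beta> * int j' + \<gamma> * int l' = s"
      using jj unfolding C_def by blast
    then show ?thesis unfolding q_def by (intro dvd_diff_of_same_line[of _ _ _ "int l" _ "int l'"] \<gamma>) simp
  qed
  have "real (card C) \<le> real (card J) / of_int q + 1"
  proof (cases "C = {}")
    case False
    have fin: "finite C" unfolding C_def by simp
    define j0 j1 where "j0 = Min C" and "j1 = Max C"
    have j01: "j0 \<in> C" "j1 \<in> C" "C \<subseteq> {j0..j1}"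
      using False fin unfolding j0_def j1_def by auto
    have "{j0..j1} \<subseteq> J"
    proof
      fix j assume j: "j \<in> {j0..j1}"
      have "\<beta> * int j0 \<le> \<beta> * int j \<and> \<beta> * int j \<le> \<beta> * int j1 \<or>
          \<beta> * int j1 \<le> \<beta> * int j \<and> \<beta> * int j \<le> \<beta> * int j0"
        using j by (cases "\<beta> \<ge> 0") (simp_all add: mult_left_mono mult_left_mono_neg)
      moreover have "j0 \<in> J" "j1 \<in> J" using j01 CJ by auto
      ultimately show "j \<in> J" using j unfolding J_def by auto
    qed
    then have "card {j0..j1} \<le> card J" unfolding J_def by (intro card_mono) auto
    then have "int j1 - int j0 \<le> int (card J)" by simp
    moreover have "real (card (int ` C)) \<le> of_int (int j1 - int j0) / of_int q + 1"
      using j01 cong by (intro card_le_of_pairwise_dvd_diff q) auto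
    moreover have "card (int ` C) = card C" by (simp add: card_image)
    ultimately show ?thesis using q
      by (smt (verit) divide_right_mono of_int_le_iff of_int_of_nat_eq of_int_pos)
  qed (use q in simp)
  then show ?thesis unfolding C_def J_def q_def .
qed

lemma sum_card_window_le:
  fixes S :: "int set" and \<beta> lo hi Q :: int and n :: nat
  assumes "finite S" "Q > 0" "lo \<le> hi"
    and "\<And>s s'. s \<in> S \<Longrightarrow> s' \<in> S \<Longrightarrow> Q dvd s - s'"
  shows "(\<Sum>s\<in>S. real (card {j. j < n \<and> s - \<beta> * int j \<in> {lo..hi}}))
    \<le> real n * (of_int (hi - lo) / of_int Q + 1)"
proof -
  have "(\<Sum>s\<in>S. real (card {j. j < n \<and> s - \<beta> * int j \<in> {lo..hi}}))
      = (\<Sum>s\<in>S. \<Sum>j<n. of_bool (s \<in> {\<beta> * int j + lo..\<beta> * int j + hi}))"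
    by (intro sum.cong) (auto simp: sum_of_bool_eq Int_def algebra_simps)
  also have "\<dots> = (\<Sum>j<n. \<Sum>s\<in>S. of_bool (s \<in> {\<beta> * int j + lo..\<beta> * int j + hi}))"
    by (rule sum.swap)
  also have "\<dots> = (\<Sum>j<n. real (card (S \<inter> {\<beta> * int j + lo..\<beta> * int j + hi})))"
    using \<open>finite S\<close> by (simp add: sum_of_bool_eq Int_def)
  also have "\<dots> \<le> (\<Sum>j<n. of_int ((\<beta> * int j + hi) - (\<beta> * int j + lo)) / of_int Q + 1)"
    by (intro sum_mono card_le_of_pairwise_dvd_diff) (use assms in auto)
  finally show ?thesis by simp
qed

lemma card_grid_points_le_sum_card_lines:
  fixes \<beta> \<gamma> :: int and n :: nat and S T :: "int set"
  assumes \<gamma>: "\<gamma> \<noteq> 0" and T: "finite T"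
    and ST: "\<And>j l. j < n \<Longrightarrow> l < n \<Longrightarrow> \<beta> * int j + \<gamma> * int l \<in> S
      \<Longrightarrow> \<beta> * int j + \<gamma> * int l \<in> T"
  shows "real (card {(j, l). j < n \<and> l < n \<and> \<beta> * int j + \<gamma> * int l \<in> S})
    \<le> (\<Sum>s\<in>T. real (card {j. j < n \<and> (\<exists>l<n. \<beta> * int j + \<gamma> * int l = s)}))"
proof -
  define C where "C s = {j. j < n \<and> (\<exists>l<n. \<beta> * int j + \<gamma> * int l = s)}" for s
  have "card {(j, l). j < n \<and> l < n \<and> \<beta> * int j + \<gamma> * int l \<in> S} \<le> card (Sigma T C)"
  proof (rule card_inj_on_le)
    show "inj_on (\<lambda>(j, l). (\<beta> * int j + \<gamma> * int l, j)) {(j, l). j < n \<and> l < n \<and> \<beta> * int j + \<gamma> * int l \<in> S}"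
      using \<gamma> by (auto simp: inj_on_def)
    show "(\<lambda>(j, l). (\<beta> * int j + \<gamma> * int l, j)) ` {(j, l). j < n \<and> l < n \<and> \<beta> * int j + \<gamma> * int l \<in> S}
        \<subseteq> Sigma T C"
      using ST unfolding C_def by auto
    show "finite (Sigma T C)" using T unfolding C_def by auto
  qed
  also have "\<dots> = (\<Sum>s\<in>T. card (C s))" using T unfolding C_def by (simp add: card_SigmaI)
  finally show ?thesis unfolding C_def by (simp flip: of_nat_sum)
qed

lemma mult_of_nat_in_hull:
  fixes \<gamma> :: int
  shows "l \<le> N \<Longrightarrow> \<gamma> * int l \<in> {min 0 (\<gamma> * int N)..max 0 (\<gamma> * int N)}"
    and "max 0 (\<gamma> * int N) - min 0 (\<gamma> * int N) = \<bar>\<gamma>\<bar> * int N"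
  by (cases "\<gamma> \<ge> 0";
      simp add: abs_mult max_def min_def zero_le_mult_iff mult_le_0_iff mult_left_mono mult_left_mono_neg)+

lemma card_grid_points_in_residue_class_le_aux:
  fixes \<beta> \<gamma> :: int and n p :: nat and S :: "int set"
  assumes \<gamma>: "\<gamma> \<noteq> 0" and p: "p > 0" and coprime: "coprime (gcd \<beta> \<gamma>) (int p)"
    and \<beta>\<gamma>: "\<bar>\<beta>\<bar> \<le> \<bar>\<gamma>\<bar>" and S: "\<And>s s'. s \<in> S \<Longrightarrow> s' \<in> S \<Longrightarrow> int p dvd s - s'"
  shows "real (card {(j, l). j < n \<and> l < n \<and> \<beta> * int j + \<gamma> * int l \<in> S})
    \<le> real n * real (n - 1) / real p + real n * of_int (gcd \<beta> \<gamma>) / of_int \<bar>\<gamma>\<bar>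
      + 4 * of_int \<bar>\<gamma>\<bar> * real n / real p + 1"
proof -
  define g where "g = gcd \<beta> \<gamma>"
  define q where "q = \<bar>\<gamma>\<bar> div g"
  \<comment> \<open>The exact hull of the values \<gamma> l, of length (n - 1) |\<gamma>|: a cruder window would spoil
    the main term n (n - 1) / p, which has to cancel against (E F)^2 in the application.\<close>
  define lo hi where "lo = min 0 (\<gamma> * int (n - 1))" and "hi = max 0 (\<gamma> * int (n - 1))"
  define T where "T = {s\<in>S. g dvd s \<and> \<bar>s\<bar> \<le> 2 * \<bar>\<gamma>\<bar> * int n}"
  define C where "C s = {j. j < n \<and> (\<exists>l<n. \<beta> * int j + \<gamma> * int l = s)}" for s
  define J where "J s = {j. j < n \<and> s - \<beta> * int j \<in> {lo..hi}}" for s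
  have g: "g > 0" "g dvd \<beta>" "g dvd \<gamma>" using \<gamma> unfolding g_def by auto
  then have gq: "\<bar>\<gamma>\<bar> = g * q" by (simp add: q_def)
  moreover have "0 < \<bar>\<gamma>\<bar>" using \<gamma> by simp
  ultimately have q: "q > 0" using g(1) by (simp add: zero_less_mult_iff)
  have finT: "finite T"
    unfolding T_def by (rule finite_subset[of _ "{-2 * \<bar>\<gamma>\<bar> * int n..2 * \<bar>\<gamma>\<bar> * int n}"]) auto
  have T_cong: "g * int p dvd s - s'" if "s \<in> T" "s' \<in> T" for s s'
    using that S[of s s'] coprime unfolding T_def g_def by (auto intro: divides_mult)
  have range: "\<gamma> * int l \<in> {lo..hi}" if "l < n" for l
    using that unfolding lo_def hi_def by (intro mult_of_nat_in_hull) simp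
  have "real (card {(j, l). j < n \<and> l < n \<and> \<beta> * int j + \<gamma> * int l \<in> S})
      \<le> (\<Sum>s\<in>T. real (card (C s)))"
    unfolding C_def
  proof (rule card_grid_points_le_sum_card_lines[OF \<gamma> finT])
    fix j l assume "j < n" "l < n" "\<beta> * int j + \<gamma> * int l \<in> S"
    moreover have "\<bar>\<beta> * int j\<bar> \<le> \<bar>\<gamma>\<bar> * int n" "\<bar>\<gamma> * int l\<bar> \<le> \<bar>\<gamma>\<bar> * int n"
      using \<open>j < n\<close> \<open>l < n\<close> \<beta>\<gamma> by (simp_all add: abs_mult mult_mono)
    ultimately show "\<beta> * int j + \<gamma> * int l \<in> T" using g unfolding T_def by auto
  qed
  also have "\<dots> \<le> (\<Sum>s\<in>T. real (card (J s)) / of_int q + 1)"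
    unfolding C_def J_def q_def g_def by (intro sum_mono card_line_fibre_le \<gamma> range)
  also have "\<dots> = (\<Sum>s\<in>T. real (card (J s))) / of_int q + real (card T)"
    by (simp add: sum.distrib sum_divide_distrib)
  also have "\<dots> \<le> real n * (of_int (hi - lo) / of_int (g * int p) + 1) / of_int q
      + (of_int (2 * \<bar>\<gamma>\<bar> * int n - - 2 * \<bar>\<gamma>\<bar> * int n) / of_int (g * int p) + 1)"
  proof (intro add_mono divide_right_mono)
    show "(\<Sum>s\<in>T. real (card (J s))) \<le> real n * (of_int (hi - lo) / of_int (g * int p) + 1)"
      unfolding J_def using finT g(1) p T_cong by (intro sum_card_window_le) (auto simp: lo_def hi_def)
    show "real (card T) \<le> of_int (2 * \<bar>\<gamma>\<bar> * int n - - 2 * \<bar>\<gamma>\<bar> * int n) / of_int (g * int p) + 1"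
      using g(1) p T_cong by (intro card_le_of_pairwise_dvd_diff) (auto simp: T_def)
  qed (use q in simp)
  also have "\<dots> \<le> real n * real (n - 1) / real p + real n * of_int g / of_int \<bar>\<gamma>\<bar>
      + 4 * of_int \<bar>\<gamma>\<bar> * real n / real p + 1"
  proof -
    have "hi - lo = \<bar>\<gamma>\<bar> * int (n - 1)" unfolding lo_def hi_def by (rule mult_of_nat_in_hull)
    then have "real n * (of_int (hi - lo) / of_int (g * int p) + 1) / of_int q
        = real n * real (n - 1) / real p + real n * of_int g / of_int \<bar>\<gamma>\<bar>"
      using gq g(1) q p by (simp add: field_simps)
    moreover have "of_int (2 * \<bar>\<gamma>\<bar> * int n - - 2 * \<bar>\<gamma>\<bar> * int n) / of_int (g * int p)
        \<le> 4 * of_int \<bar>\<gamma>\<bar> * real n / (real p :: real)"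
      using g(1) p by (simp add: frac_le)
    ultimately show ?thesis by linarith
  qed
  finally show ?thesis unfolding g_def .
qed

lemma card_grid_points_in_residue_class_le:
  fixes \<beta> \<gamma> :: int and n p :: nat and S :: "int set"
  assumes "\<beta> \<noteq> 0 \<or> \<gamma> \<noteq> 0" and "p > 0" and "coprime (gcd \<beta> \<gamma>) (int p)"
    and "\<And>s s'. s \<in> S \<Longrightarrow> s' \<in> S \<Longrightarrow> int p dvd s - s'"
  shows "real (card {(j, l). j < n \<and> l < n \<and> \<beta> * int j + \<gamma> * int l \<in> S})
    \<le> real n * real (n - 1) / real p + real n * of_int (gcd \<beta> \<gamma>) / of_int (max \<bar>\<beta>\<bar> \<bar>\<gamma>\<bar>)
      + 4 * of_int (max \<bar>\<beta>\<bar> \<bar>\<gamma>\<bar>) * real n / real p + 1"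
proof (cases "\<bar>\<beta>\<bar> \<le> \<bar>\<gamma>\<bar>")
  case True
  then show ?thesis
    using card_grid_points_in_residue_class_le_aux[of \<gamma> p \<beta> S n] assms by (auto simp: max_def)
next
  case False
  have "card {(j, l). j < n \<and> l < n \<and> \<beta> * int j + \<gamma> * int l \<in> S}
      = card {(j, l). j < n \<and> l < n \<and> \<gamma> * int j + \<beta> * int l \<in> S}"
    by (rule bij_betw_same_card[of "\<lambda>(j, l). (l, j)"])
      (auto simp: bij_betw_def inj_on_def image_def add.commute)
  then show ?thesis
    using False card_grid_points_in_residue_class_le_aux[of \<beta> p \<gamma> S n] assms
    by (auto simp: max_def gcd.commute)
qed

section \<open>Averages of gcd(a, b) / max(a, b)\<close>

lemma harm_le_1_plus_ln: "n \<ge> 1 \<Longrightarrow> harm n \<le> 1 + ln (real n)"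
  using euler_mascheroni_sequence_decreasing[of 1 n] by (simp add: harm_def)

lemma sum_inverse_max_le: "(\<Sum>i=1..n. \<Sum>j=1..n. 1 / real (max i j)) \<le> 2 * real n"
proof (induction n)
  case (Suc n)
  have split: "(\<Sum>i=1..Suc n. f i) = (\<Sum>i=1..n. f i) + f (Suc n)" for f :: "nat \<Rightarrow> real"
    by (simp add: sum.cl_ivl_Suc)
  have border: "(\<Sum>j=1..n. 1 / real (max (Suc n) j)) = real n / real (Suc n)"
    "(\<Sum>i=1..n. 1 / real (max i (Suc n))) = real n / real (Suc n)"
    by (simp_all add: max_def)
  have "(\<Sum>i=1..Suc n. \<Sum>j=1..Suc n. 1 / real (max i j))
      = (\<Sum>i=1..n. \<Sum>j=1..n. 1 / real (max i j)) + (2 * real n + 1) / real (Suc n)"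
    by (simp add: split sum.distrib border) (simp add: field_simps)
  also have "(2 * real n + 1) / real (Suc n) \<le> 2" by (simp add: divide_le_eq)
  finally show ?case using Suc.IH by simp
qed simp

lemma sum_multiples_reindex:
  fixes f :: "nat \<Rightarrow> real"
  assumes d: "d > 0"
  shows "(\<Sum>a=1..n. if d dvd a then f a else 0) = (\<Sum>i=1..n div d. f (d * i))"
proof -
  have le_iff: "d * i \<le> n \<longleftrightarrow> i \<le> n div d" for i
    using d by (simp add: less_eq_div_iff_mult_less_eq mult.commute)
  have "{a \<in> {1..n}. d dvd a} = (\<lambda>i. d * i) ` {1..n div d}"
  proof (intro set_eqI iffI)
    fix a assume "a \<in> {a \<in> {1..n}. d dvd a}"
    then obtain i where "a = d * i" "1 \<le> d * i" "d * i \<le> n" by (auto elim!: dvdE)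
    moreover from this have "1 \<le> i" by (cases i) simp_all
    ultimately show "a \<in> (\<lambda>i. d * i) ` {1..n div d}" using le_iff by auto
  next
    fix a assume "a \<in> (\<lambda>i. d * i) ` {1..n div d}"
    then obtain i where "i \<in> {1..n div d}" "a = d * i" by (rule imageE)
    moreover from this have "1 \<le> d * i" using d by simp
    ultimately show "a \<in> {a \<in> {1..n}. d dvd a}" using le_iff by auto
  qed
  then have "(\<Sum>a=1..n. if d dvd a then f a else 0) = sum f ((\<lambda>i. d * i) ` {1..n div d})"
    by (simp add: sum.inter_filter[symmetric])
  also have "\<dots> = (\<Sum>i=1..n div d. f (d * i))"
    using d by (simp add: sum.reindex inj_on_def)
  finally show ?thesis .
qed

lemma sum_common_multiples_div_max:
  assumes d: "d > 0"
  shows "(\<Sum>a=1..n. \<Sum>b=1..n. if d dvd a \<and> d dvd b then real d / real (max a b) else 0)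
    = (\<Sum>i=1..n div d. \<Sum>j=1..n div d. 1 / real (max i j))"
proof -
  have "(\<Sum>a=1..n. \<Sum>b=1..n. if d dvd a \<and> d dvd b then real d / real (max a b) else 0)
      = (\<Sum>a=1..n. if d dvd a then (\<Sum>b=1..n. if d dvd b then real d / real (max a b) else 0) else 0)"
    by (intro sum.cong) auto
  also have "\<dots> = (\<Sum>i=1..n div d. \<Sum>b=1..n. if d dvd b then real d / real (max (d * i) b) else 0)"
    by (rule sum_multiples_reindex[OF d])
  also have "\<dots> = (\<Sum>i=1..n div d. \<Sum>j=1..n div d. real d / real (max (d * i) (d * j)))"
    by (rule sum.cong[OF refl], rule sum_multiples_reindex[OF d])
  also have "\<dots> = (\<Sum>i=1..n div d. \<Sum>j=1..n div d. 1 / real (max i j))"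
    using d by (simp add: nat_mult_max_right[symmetric])
  finally show ?thesis .
qed

lemma sum_gcd_div_max_le:
  assumes "n \<ge> 1"
  shows "(\<Sum>a=1..n. \<Sum>b=1..n. real (gcd a b) / real (max a b)) \<le> 2 * real n * (1 + ln (real n))"
proof -
  define T where "T d a b = (if d dvd a \<and> d dvd b then real d / real (max a b) else 0)" for d a b
  \<comment> \<open>gcd(a, b) is one of the common divisors d of a and b\<close>
  have gcd_le: "real (gcd a b) / real (max a b) \<le> (\<Sum>d=1..n. T d a b)"
    if "a \<in> {1..n}" "b \<in> {1..n}" for a b
  proof -
    have "gcd a b \<le> a" using that by (simp add: gcd_le1_nat)
    then have "gcd a b \<le> n" using that by (meson atLeastAtMost_iff order_trans)
    moreover have "gcd a b \<ge> 1" using that by (simp add: Suc_le_eq)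
    ultimately have "gcd a b \<in> {1..n}" by simp
    then have "T (gcd a b) a b \<le> (\<Sum>d=1..n. T d a b)"
      by (rule member_le_sum) (auto simp: T_def)
    then show ?thesis by (simp add: T_def)
  qed
  have multiples: "(\<Sum>a=1..n. \<Sum>b=1..n. T d a b) = (\<Sum>i=1..n div d. \<Sum>j=1..n div d. 1 / real (max i j))"
    if "d \<in> {1..n}" for d
    using that unfolding T_def by (intro sum_common_multiples_div_max) simp
  have "(\<Sum>a=1..n. \<Sum>b=1..n. real (gcd a b) / real (max a b)) \<le> (\<Sum>a=1..n. \<Sum>b=1..n. \<Sum>d=1..n. T d a b)"
    by (intro sum_mono gcd_le)
  also have "\<dots> = (\<Sum>a=1..n. \<Sum>d=1..n. \<Sum>b=1..n. T d a b)"
    by (rule sum.cong[OF refl], rule sum.swap)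
  also have "\<dots> = (\<Sum>d=1..n. \<Sum>a=1..n. \<Sum>b=1..n. T d a b)"
    by (rule sum.swap)
  also have "\<dots> = (\<Sum>d=1..n. \<Sum>i=1..n div d. \<Sum>j=1..n div d. 1 / real (max i j))"
    by (intro sum.cong refl multiples)
  also have "\<dots> \<le> (\<Sum>d=1..n. 2 * real (n div d))"
    by (intro sum_mono sum_inverse_max_le)
  also have "\<dots> \<le> (\<Sum>d=1..n. 2 * real n * inverse (real d))"
  proof (intro sum_mono)
    fix d
    have "real (n div d) \<le> real n / real d" by (rule of_nat_div_le_of_nat)
    then show "2 * real (n div d) \<le> 2 * real n * inverse (real d)" by (simp add: divide_inverse)
  qed
  also have "\<dots> = 2 * real n * harm n"
    by (simp add: harm_def sum_distrib_left)
  also have "\<dots> \<le> 2 * real n * (1 + ln (real n))"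
    using harm_le_1_plus_ln[OF assms] by (simp add: mult_left_mono)
  finally show ?thesis .
qed

lemma sum_distance_le:
  fixes f :: "nat \<Rightarrow> real" and X :: "nat set"
  assumes f: "\<And>d. 0 \<le> f d" and X: "X \<subseteq> {..<U}" and x: "x \<notin> X" "x < U"
  shows "(\<Sum>y\<in>X. f (nat \<bar>int y - int x\<bar>)) \<le> 2 * (\<Sum>d=1..U. f d)"
proof -
  define g where "g y = f (nat \<bar>int y - int x\<bar>)" for y
  have dist: "nat \<bar>int y - int x\<bar> = (if y \<le> x then x - y else y - x)" for y
    by (rule nat_abs_int_diff)
  have "(\<Sum>y\<in>X \<inter> {x<..}. g y) = (\<Sum>y\<in>X \<inter> {x<..}. f (y - x))"
    by (intro sum.cong refl) (simp only: g_def dist, simp)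
  also have "\<dots> = (\<Sum>d\<in>(\<lambda>y. y - x) ` (X \<inter> {x<..}). f d)"
    by (subst sum.reindex) (auto simp: inj_on_def)
  also have "\<dots> \<le> (\<Sum>d=1..U. f d)"
    using X by (intro sum_mono2 f) (auto simp: subset_iff)
  finally have above: "(\<Sum>y\<in>X \<inter> {x<..}. g y) \<le> (\<Sum>d=1..U. f d)" .
  have "X - {x<..} = X \<inter> {..<x}" using x(1) by (auto simp: not_less order.order_iff_strict)
  then have "(\<Sum>y\<in>X - {x<..}. g y) = (\<Sum>y\<in>X \<inter> {..<x}. g y)" by simp
  also have "\<dots> = (\<Sum>y\<in>X \<inter> {..<x}. f (x - y))"
    by (intro sum.cong refl) (simp only: g_def dist, simp)
  also have "\<dots> = (\<Sum>d\<in>(\<lambda>y. x - y) ` (X \<inter> {..<x}). f d)"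
    by (subst sum.reindex) (auto simp: inj_on_def)
  also have "\<dots> \<le> (\<Sum>d=1..U. f d)"
    using x(2) by (intro sum_mono2 f) auto
  finally have below: "(\<Sum>y\<in>X - {x<..}. g y) \<le> (\<Sum>d=1..U. f d)" .
  have "finite X" using X finite_subset by blast
  then have "(\<Sum>y\<in>X. g y) = (\<Sum>y\<in>X \<inter> {x<..}. g y) + (\<Sum>y\<in>X - {x<..}. g y)"
    by (rule sum.Int_Diff)
  with above below show ?thesis unfolding g_def by simp
qed

section \<open>The affine map modulo p\<close>

definition affine_mod :: "nat \<Rightarrow> nat \<times> nat \<Rightarrow> nat \<Rightarrow> nat" where
  "affine_mod p st y = (fst st * y + snd st) mod p"

definition bucket_residues :: "nat \<Rightarrow> nat \<Rightarrow> nat \<Rightarrow> nat set" where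
  "bucket_residues p m b = {w. w < p \<and> w mod m = b}"

lemma hash_fn_eq_iff:
  "p > 0 \<Longrightarrow> hash_fn p m st y = b \<longleftrightarrow> affine_mod p st y \<in> bucket_residues p m b"
  unfolding hash_fn_def affine_mod_def bucket_residues_def by simp

lemma affine_mod_less: "p > 0 \<Longrightarrow> affine_mod p st y < p"
  unfolding affine_mod_def by simp

lemma int_affine_mod: "int (affine_mod p st y) = (int (fst st) * int y + int (snd st)) mod int p"
  unfolding affine_mod_def by (simp add: zmod_int)

lemma eq_of_int_dvd_diff:
  fixes a b p :: nat
  assumes "int p dvd int a - int b" "a < p" "b < p"
  shows "a = b"
proof -
  have "int a mod int p = int b mod int p" using assms(1) by (simp add: mod_eq_dvd_iff)
  then show ?thesis using assms(2,3) by simp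
qed

lemma affine_mod_eq_imp_seed_eq:
  assumes p: "prime p" and xy: "x < p" "y < p" "x \<noteq> y"
    and seeds: "st \<in> {..<p} \<times> {..<p}" "st' \<in> {..<p} \<times> {..<p}"
    and eq: "affine_mod p st x = affine_mod p st' x" "affine_mod p st y = affine_mod p st' y"
  shows "st = st'"
proof -
  obtain s t s' t' where st: "st = (s, t)" "st' = (s', t')" by fastforce
  have dvd: "int p dvd (int s - int s') * int w + (int t - int t')"
    if "affine_mod p st w = affine_mod p st' w" for w
  proof -
    have "(int s * int w + int t) mod int p = (int s' * int w + int t') mod int p"
      using that int_affine_mod[of p st w] int_affine_mod[of p st' w] st by simp
    then show ?thesis by (simp add: mod_eq_dvd_iff algebra_simps)
  qed
  have "int p dvd (int s - int s') * int x + (int t - int t') - ((int s - int s') * int y + (int t - int t'))"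
    using dvd[OF eq(1)] dvd[OF eq(2)] by (rule dvd_diff)
  then have "int p dvd (int s - int s') * (int x - int y)" by (simp add: algebra_simps)
  moreover have "\<not> int p dvd int x - int y" using eq_of_int_dvd_diff xy by blast
  ultimately have "int p dvd int s - int s'"
    using p by (simp add: prime_dvd_mult_iff)
  then have "s = s'" using seeds st by (auto intro: eq_of_int_dvd_diff)
  moreover from this have "t = t'"
    using dvd[OF eq(1)] seeds st by (auto intro: eq_of_int_dvd_diff)
  ultimately show ?thesis using st by simp
qed

lemma card_affine_mod_pair:
  assumes p: "prime p" and xy: "x < p" "y < p" "x \<noteq> y"
    and AB: "A \<subseteq> {..<p}" "B \<subseteq> {..<p}"
  shows "card {st \<in> {..<p} \<times> {..<p}. affine_mod p st x \<in> A \<and> affine_mod p st y \<in> B}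
    = card A * card B"
proof -
  define S where "S = {..<p} \<times> {..<p}"
  define \<phi> where "\<phi> st = (affine_mod p st x, affine_mod p st y)" for st
  have "p > 0" using p by (simp add: prime_gt_0_nat)
  have inj: "inj_on \<phi> S"
    by (rule inj_onI) (use affine_mod_eq_imp_seed_eq[OF p xy] in \<open>simp add: S_def \<phi>_def\<close>)
  moreover have "\<phi> ` S \<subseteq> S"
    using affine_mod_less[OF \<open>p > 0\<close>] unfolding S_def \<phi>_def by auto
  ultimately have onto: "\<phi> ` S = S"
    by (intro card_subset_eq) (simp_all add: S_def card_image)
  have "\<phi> ` {st \<in> S. \<phi> st \<in> A \<times> B} = A \<times> B"
  proof
    show "A \<times> B \<subseteq> \<phi> ` {st \<in> S. \<phi> st \<in> A \<times> B}"
    proof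
      fix w assume w: "w \<in> A \<times> B"
      then have "w \<in> \<phi> ` S" using onto AB unfolding S_def by auto
      then obtain st where "st \<in> S" "w = \<phi> st" by blast
      with w show "w \<in> \<phi> ` {st \<in> S. \<phi> st \<in> A \<times> B}" by (intro image_eqI[of _ _ st]) simp_all
    qed
  qed auto
  moreover have "inj_on \<phi> {st \<in> S. \<phi> st \<in> A \<times> B}"
    using inj by (rule inj_on_subset) simp
  ultimately have "card {st \<in> S. \<phi> st \<in> A \<times> B} = card (A \<times> B)"
    using card_image by fastforce
  then show ?thesis unfolding S_def \<phi>_def by (simp add: card_cartesian_product)
qed

lemma card_affine_mod_single:
  assumes p: "prime p" and y: "y < p" and B: "B \<subseteq> {..<p}"
  shows "card {st \<in> {..<p} \<times> {..<p}. affine_mod p st y \<in> B} = p * card B"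
proof -
  define x where "x = (if y = 0 then 1 else 0 :: nat)"
  have "x < p" "x \<noteq> y" using prime_ge_2_nat[OF p] unfolding x_def by auto
  moreover have "{st \<in> {..<p} \<times> {..<p}. affine_mod p st y \<in> B}
      = {st \<in> {..<p} \<times> {..<p}. affine_mod p st x \<in> {..<p} \<and> affine_mod p st y \<in> B}"
    using affine_mod_less[of p] prime_gt_0_nat[OF p] by auto
  ultimately show ?thesis using card_affine_mod_pair[OF p _ y _ _ B, of x "{..<p}"] by simp
qed

lemma affine_mod_collinear:
  "int p dvd (int y - int z) * int (affine_mod p st x) + (int z - int x) * int (affine_mod p st y)
     + (int x - int y) * int (affine_mod p st z)"
proof -
  define L where "L w = int (fst st) * int w + int (snd st)" for w
  define k where "k w = (int (affine_mod p st w) - L w) div int p" for w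
  have "int p dvd int (affine_mod p st w) - L w" for w
    unfolding int_affine_mod L_def by (metis dvd_minus_mod dvd_minus_iff minus_diff_eq)
  then have k: "int (affine_mod p st w) = L w + int p * k w" for w
    unfolding k_def by (simp add: algebra_simps)
  have "(int y - int z) * L x + (int z - int x) * L y + (int x - int y) * L z = 0"
    unfolding L_def by (simp add: algebra_simps)
  then have "(int y - int z) * int (affine_mod p st x) + (int z - int x) * int (affine_mod p st y)
      + (int x - int y) * int (affine_mod p st z)
    = int p * ((int y - int z) * k x + (int z - int x) * k y + (int x - int y) * k z)"
    unfolding k by (simp add: algebra_simps)
  then show ?thesis by simp
qed

lemma bucket_residues_eq_image_aux:
  assumes m: "0 < m" and b: "b < m"
  shows "bucket_residues p m b = (\<lambda>j. b + m * j) ` {..<(p + m - 1 - b) div m}"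
proof -
  have less_iff: "b + m * j < p \<longleftrightarrow> j < (p + m - 1 - b) div m" for j
  proof -
    have "j < (p + m - 1 - b) div m \<longleftrightarrow> j + 1 \<le> (p + m - 1 - b) div m" by linarith
    also have "\<dots> \<longleftrightarrow> (j + 1) * m \<le> p + m - 1 - b"
      using m by (rule less_eq_div_iff_mult_less_eq)
    also have "(j + 1) * m = m * j + m" by simp
    also have "m * j + m \<le> p + m - 1 - b \<longleftrightarrow> b + m * j < p" using b by linarith
    finally show ?thesis by simp
  qed
  show ?thesis
  proof (intro set_eqI iffI)
    fix w assume "w \<in> bucket_residues p m b"
    then have "w < p" "w = b + m * (w div m)"
      unfolding bucket_residues_def by (auto simp: mod_mult_div_eq[symmetric] add.commute)
    then show "w \<in> (\<lambda>j. b + m * j) ` {..<(p + m - 1 - b) div m}"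
      using less_iff by (metis imageI lessThan_iff)
  next
    fix w assume "w \<in> (\<lambda>j. b + m * j) ` {..<(p + m - 1 - b) div m}"
    then obtain j where "j < (p + m - 1 - b) div m" "w = b + m * j" by blast
    then show "w \<in> bucket_residues p m b"
      unfolding bucket_residues_def using less_iff b by simp
  qed
qed

lemma card_bucket_residues:
  "0 < m \<Longrightarrow> b < m \<Longrightarrow> card (bucket_residues p m b) = (p + m - 1 - b) div m"
  by (simp add: bucket_residues_eq_image_aux card_image inj_on_def)

lemma bucket_residues_eq_image:
  assumes "0 < m" "b < m"
  shows "bucket_residues p m b = (\<lambda>j. b + m * j) ` {..<card (bucket_residues p m b)}"
  by (subst card_bucket_residues[OF assms]) (rule bucket_residues_eq_image_aux[OF assms])

lemma card_bucket_residues_bounds: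
  assumes m: "0 < m" and b: "b < m"
  shows "real p / real m - 1 \<le> real (card (bucket_residues p m b))"
    and "real (card (bucket_residues p m b)) \<le> real p / real m + 1"
proof -
  define c where "c = p + m - 1 - b"
  have c: "real p \<le> real c" "real c \<le> real p + real m" using m b unfolding c_def by auto
  have "real c = real (c div m) * real m + real (c mod m)"
    by (metis div_mult_mod_eq of_nat_add of_nat_mult)
  moreover have "real (c mod m) < real m" using m by simp
  ultimately have "real c / real m - 1 \<le> real (c div m)" "real (c div m) \<le> real c / real m"
    using m by (simp_all add: field_simps)
  moreover have "real p / real m \<le> real c / real m" "real c / real m \<le> real p / real m + 1"
    using c m by (simp_all add: divide_right_mono field_simps)
  ultimately show "real p / real m - 1 \<le> real (card (bucket_residues p m b))"
    and "real (card (bucket_residues p m b)) \<le> real p / real m + 1"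
    unfolding card_bucket_residues[OF m b] c_def[symmetric] by linarith+
qed

lemma bucket_residues_subset: "bucket_residues p m b \<subseteq> {..<p}"
  unfolding bucket_residues_def by auto

lemma card_bucket_residues_pos:
  assumes "b < m" "m < p"
  shows "0 < card (bucket_residues p m b)"
proof -
  have "b \<in> bucket_residues p m b" using assms unfolding bucket_residues_def by simp
  moreover have "finite (bucket_residues p m b)"
    using bucket_residues_subset by (rule finite_subset) simp
  ultimately show ?thesis by (auto simp: card_gt_0_iff)
qed

lemma bucket_residues_elem:
  assumes "0 < m" "b < m" "w \<in> bucket_residues p m b"
  shows "w = b + m * (w div m)" and "w div m < card (bucket_residues p m b)"
proof -
  obtain j where "j < card (bucket_residues p m b)" "w = b + m * j"
    using assms bucket_residues_eq_image[OF assms(1,2), of p] by auto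
  moreover from this have "w div m = j" using assms(2) by simp
  ultimately show "w = b + m * (w div m)" "w div m < card (bucket_residues p m b)" by simp_all
qed

lemma card_affine_mod_triple_fixed_le_card_grid:
  fixes x y z u m b :: nat
  assumes p: "prime p" and xy: "x < p" "y < p" "x \<noteq> y" and m: "0 < m" and b: "b < m"
  defines "B \<equiv> bucket_residues p m b" and "n \<equiv> card (bucket_residues p m b)"
    and "\<beta> \<equiv> int z - int x" and "\<gamma> \<equiv> int x - int y"
  shows "card {st \<in> {..<p} \<times> {..<p}. affine_mod p st x = u
      \<and> affine_mod p st y \<in> B \<and> affine_mod p st z \<in> B}
    \<le> card {(j, l). j < n \<and> l < n
      \<and> int p dvd (int y - int z) * int u + (\<beta> + \<gamma>) * int b + int m * (\<beta> * int j + \<gamma> * int l)}"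
proof (rule card_inj_on_le)
  define Q where "Q = {st \<in> {..<p} \<times> {..<p}. affine_mod p st x = u
      \<and> affine_mod p st y \<in> B \<and> affine_mod p st z \<in> B}"
  define \<psi> where "\<psi> st = (affine_mod p st y div m, affine_mod p st z div m)" for st
  note B_elem = bucket_residues_elem[OF m b, where p = p, folded B_def n_def]
  show "inj_on \<psi> Q"
  proof (rule inj_onI)
    fix st st' assume Q: "st \<in> Q" "st' \<in> Q" and "\<psi> st = \<psi> st'"
    then have "affine_mod p st y = affine_mod p st' y"
      using B_elem(1) unfolding Q_def \<psi>_def by (metis (no_types, lifting) mem_Collect_eq prod.inject)
    moreover have "affine_mod p st x = affine_mod p st' x" using Q unfolding Q_def by simp
    ultimately show "st = st'"
      using Q affine_mod_eq_imp_seed_eq[OF p xy] unfolding Q_def by blast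
  qed
  show "\<psi> ` Q \<subseteq> {(j, l). j < n \<and> l < n
      \<and> int p dvd (int y - int z) * int u + (\<beta> + \<gamma>) * int b + int m * (\<beta> * int j + \<gamma> * int l)}"
  proof (rule image_subsetI)
    fix st assume "st \<in> Q"
    then have st: "affine_mod p st x = u" "affine_mod p st y \<in> B" "affine_mod p st z \<in> B"
      unfolding Q_def by auto
    define j l where "j = affine_mod p st y div m" and "l = affine_mod p st z div m"
    have "(int y - int z) * int (affine_mod p st x) + (int z - int x) * int (affine_mod p st y)
        + (int x - int y) * int (affine_mod p st z)
      = (int y - int z) * int u + (\<beta> + \<gamma>) * int b + int m * (\<beta> * int j + \<gamma> * int l)"
      by (subst B_elem(1)[OF st(2)], subst B_elem(1)[OF st(3)])
        (simp add: st(1) j_def l_def \<beta>_def \<gamma>_def algebra_simps)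
    then have "int p dvd (int y - int z) * int u + (\<beta> + \<gamma>) * int b + int m * (\<beta> * int j + \<gamma> * int l)"
      using affine_mod_collinear[of p y z st x] by simp
    then show "\<psi> st \<in> {(j, l). j < n \<and> l < n
        \<and> int p dvd (int y - int z) * int u + (\<beta> + \<gamma>) * int b + int m * (\<beta> * int j + \<gamma> * int l)}"
      using B_elem(2) st unfolding \<psi>_def j_def l_def by simp
  qed
qed (auto intro: finite_subset[of _ "{..<n} \<times> {..<n}"])

lemma card_affine_mod_triple_fixed_le:
  fixes x y z u m b :: nat
  assumes p: "prime p" and xyz: "x < p" "y < p" "z < p" "x \<noteq> y" "x \<noteq> z"
    and m: "0 < m" "m < p" and b: "b < m"
  defines "B \<equiv> bucket_residues p m b" and "n \<equiv> card (bucket_residues p m b)"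
    and "\<beta> \<equiv> int z - int x" and "\<gamma> \<equiv> int x - int y"
  shows "real (card {st \<in> {..<p} \<times> {..<p}. affine_mod p st x = u
      \<and> affine_mod p st y \<in> B \<and> affine_mod p st z \<in> B})
    \<le> real n * real (n - 1) / real p + real n * of_int (gcd \<beta> \<gamma>) / of_int (max \<bar>\<beta>\<bar> \<bar>\<gamma>\<bar>)
      + 4 * of_int (max \<bar>\<beta>\<bar> \<bar>\<gamma>\<bar>) * real n / real p + 1"
proof -
  define S where "S = {s. int p dvd (int y - int z) * int u + (\<beta> + \<gamma>) * int b + int m * s}"
  have "real (card {st \<in> {..<p} \<times> {..<p}. affine_mod p st x = u
      \<and> affine_mod p st y \<in> B \<and> affine_mod p st z \<in> B})
    \<le> real (card {(j, l). j < n \<and> l < n \<and> \<beta> * int j + \<gamma> * int l \<in> S})"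
    using card_affine_mod_triple_fixed_le_card_grid[OF p xyz(1,2,4) m(1) b, where z = z and u = u]
    unfolding B_def n_def \<beta>_def \<gamma>_def S_def by simp
  also have "\<dots> \<le> real n * real (n - 1) / real p
      + real n * of_int (gcd \<beta> \<gamma>) / of_int (max \<bar>\<beta>\<bar> \<bar>\<gamma>\<bar>)
      + 4 * of_int (max \<bar>\<beta>\<bar> \<bar>\<gamma>\<bar>) * real n / real p + 1"
  proof (rule card_grid_points_in_residue_class_le)
    have "\<beta> \<noteq> 0" using xyz unfolding \<beta>_def by simp
    then show "\<beta> \<noteq> 0 \<or> \<gamma> \<noteq> 0" ..
    have "\<bar>\<beta>\<bar> < int p" using xyz unfolding \<beta>_def by auto
    then have "\<not> int p dvd \<beta>" using \<open>\<beta> \<noteq> 0\<close> by (auto dest: dvd_imp_le_int)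
    then have "\<not> int p dvd gcd \<beta> \<gamma>" by auto
    then show "coprime (gcd \<beta> \<gamma>) (int p)"
      using p by (simp add: prime_imp_coprime coprime_commute)
    have "\<not> int p dvd int m" using m by (auto dest: zdvd_imp_le)
    moreover have "int p dvd int m * (s - s')" if "s \<in> S" "s' \<in> S" for s s'
      using dvd_diff[OF that[unfolded S_def mem_Collect_eq]] by (simp add: algebra_simps)
    ultimately show "int p dvd s - s'" if "s \<in> S" "s' \<in> S" for s s'
      using that p by (simp add: prime_dvd_mult_iff)
  qed (use p in \<open>simp add: prime_gt_0_nat\<close>)
  finally show ?thesis .
qed

lemma card_affine_mod_triple_le:
  fixes x y z m b :: nat and A :: "nat set"
  assumes p: "prime p" and xyz: "x < p" "y < p" "z < p" "x \<noteq> y" "x \<noteq> z"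
    and m: "0 < m" "m < p" and b: "b < m" and A: "finite A"
  defines "B \<equiv> bucket_residues p m b" and "n \<equiv> card (bucket_residues p m b)"
    and "\<beta> \<equiv> int z - int x" and "\<gamma> \<equiv> int x - int y"
  shows "real (card {st \<in> {..<p} \<times> {..<p}. affine_mod p st x \<in> A
      \<and> affine_mod p st y \<in> B \<and> affine_mod p st z \<in> B})
    \<le> real (card A) * (real n * real (n - 1) / real p
      + real n * of_int (gcd \<beta> \<gamma>) / of_int (max \<bar>\<beta>\<bar> \<bar>\<gamma>\<bar>)
      + 4 * of_int (max \<bar>\<beta>\<bar> \<bar>\<gamma>\<bar>) * real n / real p + 1)"
proof -
  define Q where "Q u = {st \<in> {..<p} \<times> {..<p}. affine_mod p st x = u
      \<and> affine_mod p st y \<in> B \<and> affine_mod p st z \<in> B}" for u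
  have "{st \<in> {..<p} \<times> {..<p}. affine_mod p st x \<in> A
      \<and> affine_mod p st y \<in> B \<and> affine_mod p st z \<in> B} = (\<Union>u\<in>A. Q u)"
    unfolding Q_def by blast
  then have "real (card {st \<in> {..<p} \<times> {..<p}. affine_mod p st x \<in> A
      \<and> affine_mod p st y \<in> B \<and> affine_mod p st z \<in> B}) \<le> (\<Sum>u\<in>A. real (card (Q u)))"
    using card_UN_le[OF A, of Q] by (simp flip: of_nat_sum)
  also have "\<dots> \<le> (\<Sum>u\<in>A. real n * real (n - 1) / real p
      + real n * of_int (gcd \<beta> \<gamma>) / of_int (max \<bar>\<beta>\<bar> \<bar>\<gamma>\<bar>)
      + 4 * of_int (max \<bar>\<beta>\<bar> \<bar>\<gamma>\<bar>) * real n / real p + 1)"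
    unfolding Q_def B_def n_def \<beta>_def \<gamma>_def
    by (intro sum_mono card_affine_mod_triple_fixed_le p xyz m b)
  finally show ?thesis by simp
qed

lemma cond_pmf_of_set:
  assumes "finite S" "S \<inter> E \<noteq> {}"
  shows "cond_pmf (pmf_of_set S) E = pmf_of_set (S \<inter> E)"
proof (rule pmf_eqI)
  fix st
  have "S \<noteq> {}" using assms by auto
  then have "set_pmf (pmf_of_set S) \<inter> E \<noteq> {}" using assms by auto
  then show "pmf (cond_pmf (pmf_of_set S) E) st = pmf (pmf_of_set (S \<inter> E)) st"
    using assms \<open>S \<noteq> {}\<close> by (subst pmf_cond) (auto simp: measure_pmf_of_set indicator_def)
qed

section \<open>Moments of the bucket load\<close>

locale affine_hash_bucket =
  fixes U p m x a b :: nat and X :: "nat set"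
  assumes X_subset: "X \<subseteq> {..<U}" and prime: "prime p" and p_large: "4 * real U ^ 2 < real p"
    and m_pos: "0 < m" and m_le: "m \<le> U" and x_less: "x < U" and x_notin: "x \<notin> X"
    and a_less: "a < m" and b_less: "b < m"
begin

abbreviation "A \<equiv> bucket_residues p m a"
abbreviation "B \<equiv> bucket_residues p m b"
abbreviation "F \<equiv> bucket_load p m X b"

definition cond_seeds :: "(nat \<times> nat) set" where
  "cond_seeds = {st \<in> {..<p} \<times> {..<p}. affine_mod p st x \<in> A}"

definition dist_x :: "nat \<Rightarrow> nat" where
  "dist_x y = nat \<bar>int y - int x\<bar>"

definition weight :: "nat \<Rightarrow> nat \<Rightarrow> real" where
  "weight y z = real (gcd (dist_x y) (dist_x z)) / real (max (dist_x y) (dist_x z))"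

lemma U_less_p: "U < p"
proof -
  have "real U \<le> 4 * real U ^ 2" by (cases U) (auto simp: power2_eq_square)
  then show ?thesis using p_large by linarith
qed

lemma p_pos: "0 < p" and m_less_p: "m < p" and x_less_p: "x < p"
  and X_less_p: "y \<in> X \<Longrightarrow> y < p" and finite_X: "finite X"
  using U_less_p m_le x_less X_subset finite_subset by auto

lemma card_A_pos: "0 < card A" and card_B_pos: "0 < card B"
  using card_bucket_residues_pos a_less b_less m_less_p by auto

lemma F_eq: "F st = (\<Sum>y\<in>X. of_bool (affine_mod p st y \<in> B))"
  unfolding bucket_load_def hash_fn_eq_iff[OF p_pos] ..

lemma sum_F:
  "finite T \<Longrightarrow> (\<Sum>st\<in>T. F st) = (\<Sum>y\<in>X. real (card {st \<in> T. affine_mod p st y \<in> B}))"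
  unfolding F_eq by (subst sum.swap) (simp add: sum_of_bool_eq Int_def)

lemma sum_F_squared:
  "finite T \<Longrightarrow> (\<Sum>st\<in>T. (F st)\<^sup>2)
    = (\<Sum>y\<in>X. \<Sum>z\<in>X. real (card {st \<in> T. affine_mod p st y \<in> B \<and> affine_mod p st z \<in> B}))"
  unfolding F_eq power2_eq_square sum_product
  by (subst sum.swap, subst sum.swap) (simp add: sum_of_bool_eq Int_def of_bool_conj)

lemma card_cond_seeds: "card cond_seeds = p * card A"
  unfolding cond_seeds_def
  by (rule card_affine_mod_single[OF prime x_less_p bucket_residues_subset])

lemma finite_cond_seeds: "finite cond_seeds"
  unfolding cond_seeds_def by simp

lemma cond_seeds_nonempty: "cond_seeds \<noteq> {}"
proof
  assume "cond_seeds = {}"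
  then have "card cond_seeds = 0" by simp
  with card_cond_seeds card_A_pos p_pos show False by simp
qed

lemma card_cond_seeds_single:
  assumes "y \<in> X"
  shows "card {st \<in> cond_seeds. affine_mod p st y \<in> B} = card A * card B"
proof -
  have "{st \<in> cond_seeds. affine_mod p st y \<in> B}
      = {st \<in> {..<p} \<times> {..<p}. affine_mod p st x \<in> A \<and> affine_mod p st y \<in> B}"
    unfolding cond_seeds_def by auto
  moreover have "x \<noteq> y" using assms x_notin by auto
  ultimately show ?thesis
    using card_affine_mod_pair[OF prime x_less_p X_less_p[OF assms]] bucket_residues_subset by simp
qed

lemma cond_pmf_seed_pmf: "cond_pmf (seed_pmf p) {st. hash_fn p m st x = a} = pmf_of_set cond_seeds"
proof -
  have "cond_seeds \<noteq> {}" by (rule cond_seeds_nonempty)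
  moreover have "({..<p} \<times> {..<p}) \<inter> {st. hash_fn p m st x = a} = cond_seeds"
    unfolding cond_seeds_def hash_fn_eq_iff[OF p_pos] by auto
  ultimately show ?thesis unfolding seed_pmf_def by (subst cond_pmf_of_set) auto
qed

lemma expectation_F: "measure_pmf.expectation (seed_pmf p) F = real (card X) * real (card B) / real p"
proof -
  have "{..<p} \<times> {..<p} \<noteq> {}" using p_pos by auto
  then have "measure_pmf.expectation (seed_pmf p) F
      = (\<Sum>st\<in>{..<p} \<times> {..<p}. F st) / real (p * p)"
    unfolding seed_pmf_def by (simp add: integral_pmf_of_set card_cartesian_product)
  also have "(\<Sum>st\<in>{..<p} \<times> {..<p}. F st) = (\<Sum>y\<in>X. real (p * card B))"
    unfolding sum_F[OF finite_cartesian_product[OF finite_lessThan finite_lessThan]]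
    by (intro sum.cong refl) (simp add: card_affine_mod_single[OF prime X_less_p bucket_residues_subset])
  also have "\<dots> / real (p * p) = real (card X) * real (card B) / real p"
    using p_pos by simp
  finally show ?thesis .
qed

lemma cond_expectation_F:
  "measure_pmf.expectation (pmf_of_set cond_seeds) F = real (card X) * real (card B) / real p"
proof -
  have "measure_pmf.expectation (pmf_of_set cond_seeds) F
      = (\<Sum>st\<in>cond_seeds. F st) / real (p * card A)"
    by (simp add: integral_pmf_of_set cond_seeds_nonempty finite_cond_seeds card_cond_seeds)
  also have "(\<Sum>st\<in>cond_seeds. F st) = (\<Sum>y\<in>X. real (card A * card B))"
    unfolding sum_F[OF finite_cond_seeds] by (intro sum.cong refl) (simp add: card_cond_seeds_single)
  also have "\<dots> / real (p * card A) = real (card X) * real (card B) / real p"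
    using card_A_pos by simp
  finally show ?thesis .
qed

lemma card_X_le: "card X \<le> U"
  using card_mono[OF _ X_subset] by simp

lemma expectation_F_close: "\<bar>real (card X) * real (card B) / real p - real (card X) / real m\<bar> \<le> 1"
proof -
  have "\<bar>real (card B) - real p / real m\<bar> \<le> 1"
    using card_bucket_residues_bounds[OF m_pos b_less, of p] by linarith
  have "real (card X) * real (card B) / real p - real (card X) / real m
      = real (card X) * (real (card B) - real p / real m) / real p"
    using p_pos m_pos by (simp add: field_simps)
  then have "\<bar>real (card X) * real (card B) / real p - real (card X) / real m\<bar>
      = real (card X) * \<bar>real (card B) - real p / real m\<bar> / real p"
    by (simp add: abs_mult)
  also have "\<dots> \<le> real (card X) * 1 / real p"
    using \<open>\<bar>real (card B) - real p / real m\<bar> \<le> 1\<close> by (intro divide_right_mono mult_left_mono) auto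
  also have "\<dots> \<le> 1" using card_X_le U_less_p by simp
  finally show ?thesis .
qed

lemma card_B_ge_U: "real U \<le> real (card B)"
proof (cases "U = 0")
  case False
  have "real p / real U \<le> real p / real m" using m_pos m_le by (intro divide_left_mono) auto
  moreover have "4 * real U \<le> real p / real U"
    using p_large False by (simp add: field_simps power2_eq_square)
  moreover have "real p / real m - 1 \<le> real (card B)"
    by (rule card_bucket_residues_bounds(1)[OF m_pos b_less])
  ultimately show ?thesis using False by linarith
qed simp

lemma of_int_gcd_dist: "of_int (gcd (int z - int x) (int x - int y)) = real (gcd (dist_x y) (dist_x z))"
  unfolding gcd_int_def dist_x_def by (simp add: abs_minus_commute gcd.commute)

lemma of_int_max_dist:
  "of_int (max \<bar>int z - int x\<bar> \<bar>int x - int y\<bar>) = real (max (dist_x y) (dist_x z))"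
  unfolding dist_x_def by (simp add: abs_minus_commute max.commute of_nat_max)

text \<open>The case y = z is included, so the diagonal of the second moment needs no separate bound.\<close>

lemma card_cond_seeds_pair_le:
  assumes y: "y \<in> X" and z: "z \<in> X"
  shows "real (card {st \<in> cond_seeds. affine_mod p st y \<in> B \<and> affine_mod p st z \<in> B})
    \<le> real (card A) * (real (card B) ^ 2 / real p + real (card B) * weight y z
      + 4 * real U * real (card B) / real p + 1)"
proof -
  let ?\<beta> = "int z - int x" and ?\<gamma> = "int x - int y" and ?n = "real (card B)"
  have "{st \<in> cond_seeds. affine_mod p st y \<in> B \<and> affine_mod p st z \<in> B}
      = {st \<in> {..<p} \<times> {..<p}. affine_mod p st x \<in> A \<and> affine_mod p st y \<in> B \<and> affine_mod p st z \<in> B}"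
    unfolding cond_seeds_def by auto
  moreover have "x \<noteq> y" "x \<noteq> z" using y z x_notin by auto
  ultimately have "real (card {st \<in> cond_seeds. affine_mod p st y \<in> B \<and> affine_mod p st z \<in> B})
      \<le> real (card A) * (?n * real (card B - 1) / real p
        + ?n * of_int (gcd ?\<beta> ?\<gamma>) / of_int (max \<bar>?\<beta>\<bar> \<bar>?\<gamma>\<bar>)
        + 4 * of_int (max \<bar>?\<beta>\<bar> \<bar>?\<gamma>\<bar>) * ?n / real p + 1)"
    using card_affine_mod_triple_le[OF prime x_less_p X_less_p[OF y] X_less_p[OF z] _ _ m_pos m_less_p
        b_less finite_subset[OF bucket_residues_subset]] by simp
  also have "\<dots> \<le> real (card A) * (?n ^ 2 / real p + ?n * weight y z + 4 * real U * ?n / real p + 1)"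
  proof (intro mult_left_mono add_mono order.refl)
    have "?n * real (card B - 1) \<le> ?n * ?n" by (intro mult_left_mono) simp_all
    then show "?n * real (card B - 1) / real p \<le> ?n ^ 2 / real p"
      by (simp add: power2_eq_square divide_right_mono)
    show "?n * of_int (gcd ?\<beta> ?\<gamma>) / of_int (max \<bar>?\<beta>\<bar> \<bar>?\<gamma>\<bar>) \<le> ?n * weight y z"
      unfolding of_int_gcd_dist of_int_max_dist weight_def by simp
    have "y < U" "z < U" using y z X_subset by auto
    then have "max \<bar>?\<beta>\<bar> \<bar>?\<gamma>\<bar> \<le> int U" using x_less by (simp add: max_def abs_if)
    then have "of_int (max \<bar>?\<beta>\<bar> \<bar>?\<gamma>\<bar>) \<le> real U" by (metis of_int_le_iff of_int_of_nat_eq)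
    then show "4 * of_int (max \<bar>?\<beta>\<bar> \<bar>?\<gamma>\<bar>) * ?n / real p \<le> 4 * real U * ?n / real p"
      by (intro divide_right_mono mult_right_mono) simp_all
  qed simp
  finally show ?thesis .
qed

lemma sum_dist_x_le:
  fixes f :: "nat \<Rightarrow> real"
  assumes "\<And>d. 0 \<le> f d"
  shows "(\<Sum>y\<in>X. f (dist_x y)) \<le> 2 * (\<Sum>d=1..U. f d)"
  unfolding dist_x_def by (rule sum_distance_le[OF assms X_subset x_notin x_less])

lemma sum_weight_le: "(\<Sum>y\<in>X. \<Sum>z\<in>X. weight y z) \<le> 8 * real U * (1 + ln (real U))"
proof -
  define \<phi> where "\<phi> d e = real (gcd d e) / real (max d e)" for d e
  have \<phi>: "0 \<le> \<phi> d e" for d e unfolding \<phi>_def by simp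
  have "(\<Sum>y\<in>X. \<Sum>z\<in>X. weight y z) \<le> (\<Sum>y\<in>X. 2 * (\<Sum>e=1..U. \<phi> (dist_x y) e))"
    unfolding weight_def \<phi>_def[symmetric] by (intro sum_mono sum_dist_x_le \<phi>)
  also have "\<dots> = 2 * (\<Sum>e=1..U. \<Sum>y\<in>X. \<phi> (dist_x y) e)"
    by (simp add: sum_distrib_left sum.swap[of _ X])
  also have "\<dots> \<le> 2 * (\<Sum>e=1..U. 2 * (\<Sum>d=1..U. \<phi> d e))"
    by (intro mult_left_mono sum_mono sum_dist_x_le \<phi>) simp
  also have "\<dots> = 4 * (\<Sum>d=1..U. \<Sum>e=1..U. \<phi> d e)"
    by (subst sum.swap) (simp add: sum_distrib_left)
  also have "\<dots> \<le> 4 * (2 * real U * (1 + ln (real U)))"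
    unfolding \<phi>_def using x_less by (intro mult_left_mono sum_gcd_div_max_le) simp_all
  finally show ?thesis by simp
qed

lemma sum_F_squared_le:
  "(\<Sum>st\<in>cond_seeds. (F st)\<^sup>2) \<le> real (card A) * (real (card X) ^ 2 * real (card B) ^ 2 / real p
      + real (card B) * (\<Sum>y\<in>X. \<Sum>z\<in>X. weight y z)
      + real (card X) ^ 2 * (4 * real U * real (card B) / real p + 1))"
proof -
  have "(\<Sum>st\<in>cond_seeds. (F st)\<^sup>2) \<le> (\<Sum>y\<in>X. \<Sum>z\<in>X. real (card A) * (real (card B) ^ 2 / real p
      + real (card B) * weight y z + (4 * real U * real (card B) / real p + 1)))"
    unfolding sum_F_squared[OF finite_cond_seeds]
    using card_cond_seeds_pair_le by (intro sum_mono) (simp add: add.assoc)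
  also have "\<dots> = real (card A) * (real (card X) ^ 2 * real (card B) ^ 2 / real p
      + real (card B) * (\<Sum>y\<in>X. \<Sum>z\<in>X. weight y z)
      + real (card X) ^ 2 * (4 * real U * real (card B) / real p + 1))"
    by (simp add: sum.distrib sum_distrib_left sum_distrib_right power2_eq_square algebra_simps)
  finally show ?thesis .
qed

lemma cond_variance_F_le:
  "measure_pmf.variance (pmf_of_set cond_seeds) F
    \<le> (real (card B) * (\<Sum>y\<in>X. \<Sum>z\<in>X. weight y z)
        + real (card X) ^ 2 * (4 * real U * real (card B) / real p + 1)) / real p"
    (is "_ \<le> ?V / real p")
proof -
  define \<mu> where "\<mu> = real (card X) * real (card B) / real p"
  define N where "N = real (card cond_seeds)"
  have N: "N = real p * real (card A)" "N > 0"
    using card_cond_seeds card_A_pos p_pos unfolding N_def by simp_all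
  have expectation: "measure_pmf.expectation (pmf_of_set cond_seeds) f = (\<Sum>st\<in>cond_seeds. f st) / N"
    for f :: "nat \<times> nat \<Rightarrow> real"
    unfolding N_def by (simp add: integral_pmf_of_set cond_seeds_nonempty finite_cond_seeds)
  have sum_F: "(\<Sum>st\<in>cond_seeds. F st) = N * \<mu>"
    using cond_expectation_F N(2) unfolding expectation \<mu>_def by (simp add: field_simps)
  have "(\<Sum>st\<in>cond_seeds. (F st - \<mu>)\<^sup>2)
      = (\<Sum>st\<in>cond_seeds. (F st)\<^sup>2) - 2 * \<mu> * (\<Sum>st\<in>cond_seeds. F st) + N * \<mu>\<^sup>2"
    unfolding N_def power2_diff by (simp add: sum.distrib sum_subtractf sum_distrib_left mult_ac)
  also have "\<dots> = (\<Sum>st\<in>cond_seeds. (F st)\<^sup>2) - N * \<mu>\<^sup>2"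
    unfolding sum_F by (simp add: power2_eq_square)
  also have "N * \<mu>\<^sup>2 = real (card A) * (real (card X) ^ 2 * real (card B) ^ 2 / real p)"
    unfolding N(1) \<mu>_def using p_pos by (simp add: power2_eq_square)
  also have "(\<Sum>st\<in>cond_seeds. (F st)\<^sup>2) - \<dots> \<le> real (card A) * ?V"
    using sum_F_squared_le by (simp add: algebra_simps)
  also have "\<dots> = N * (?V / real p)" using N(1) p_pos by simp
  finally show ?thesis
    using N(2) cond_expectation_F unfolding expectation \<mu>_def by (simp add: field_simps)
qed

lemma half_le_ln_U: "X \<noteq> {} \<Longrightarrow> 1 / 2 \<le> ln (real U)"
proof -
  assume "X \<noteq> {}"
  then obtain y where "y \<in> X" by blast
  then have "y < U" "y \<noteq> x" using X_subset x_notin by auto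
  then have "2 \<le> U" using x_less by linarith
  then have "ln 2 \<le> ln (real U)" by simp
  then show ?thesis using ln2_ge_two_thirds by linarith
qed

lemma variance_numerator_le:
  assumes "X \<noteq> {}"
  shows "real (card B) * (\<Sum>y\<in>X. \<Sum>z\<in>X. weight y z)
      + real (card X) ^ 2 * (4 * real U * real (card B) / real p + 1)
    \<le> 100 * (real U * ln (real U)) * real (card B)"
proof -
  let ?n = "real (card B)"
  define P L where "P = real U * ?n" and "L = ln (real U)"
  have k: "real (card X) ^ 2 \<le> real U ^ 2" using card_X_le by simp
  have "real (card X) ^ 2 * (4 * real U * ?n / real p) = 4 * real U * real (card X) ^ 2 * ?n / real p"
    by simp
  also have "\<dots> \<le> 4 * real U * real U ^ 2 * ?n / real p"
    using k by (intro divide_right_mono mult_right_mono mult_left_mono) simp_all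
  also have "\<dots> = P * (4 * real U ^ 2 / real p)" by (simp add: P_def)
  also have "\<dots> \<le> P"
    using p_large p_pos by (intro mult_left_le) (simp_all add: P_def)
  finally have "real (card X) ^ 2 * (4 * real U * ?n / real p) \<le> P" .
  moreover have "real (card X) ^ 2 \<le> P"
    using k card_B_ge_U unfolding P_def power2_eq_square by (metis mult_left_mono of_nat_0_le_iff order.trans)
  moreover have "?n * (\<Sum>y\<in>X. \<Sum>z\<in>X. weight y z) \<le> 8 * P + 8 * (L * P)"
    using mult_left_mono[OF sum_weight_le, of ?n] by (simp add: P_def L_def algebra_simps)
  moreover have "1 * P \<le> (2 * L) * P"
    using half_le_ln_U[OF assms] unfolding L_def P_def by (intro mult_right_mono) simp_all
  then have "P \<le> 2 * (L * P)" by simp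
  moreover have "0 \<le> P" unfolding P_def by simp
  ultimately have "?n * (\<Sum>y\<in>X. \<Sum>z\<in>X. weight y z)
      + real (card X) ^ 2 * (4 * real U * ?n / real p + 1) \<le> 100 * (L * P)"
    by (simp add: distrib_left)
  then show ?thesis by (simp add: P_def L_def mult_ac)
qed

lemma cond_deviation_prob_le:
  assumes lam: "0 < lam" and X: "X \<noteq> {}"
  defines "\<mu> \<equiv> measure_pmf.expectation (seed_pmf p) F"
  shows "measure_pmf.prob (pmf_of_set cond_seeds) {st. \<bar>F st - \<mu>\<bar> \<ge> lam * sqrt \<mu>}
    \<le> 100 * (real U * ln (real U)) / (lam\<^sup>2 * real (card X))"
proof -
  let ?M = "pmf_of_set cond_seeds" and ?n = "real (card B)" and ?k = "real (card X)"
  have \<mu>: "\<mu> = ?k * ?n / real p" "\<mu> > 0"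
    unfolding \<mu>_def expectation_F using X finite_X card_B_pos p_pos by (simp_all add: card_gt_0_iff)
  have "measure_pmf.prob ?M {st. \<bar>F st - \<mu>\<bar> \<ge> lam * sqrt \<mu>}
      \<le> measure_pmf.variance ?M F / (lam\<^sup>2 * \<mu>)"
    using measure_pmf.Chebyshev_inequality[where M = ?M and f = F and a = "lam * sqrt \<mu>"] lam \<mu>(2)
      cond_expectation_F finite_cond_seeds cond_seeds_nonempty
    by (simp add: \<mu>(1) integrable_measure_pmf_finite power_mult_distrib)
  also have "\<dots> \<le> ((?n * (\<Sum>y\<in>X. \<Sum>z\<in>X. weight y z) + ?k\<^sup>2 * (4 * real U * ?n / real p + 1)) / real p)
      / (lam\<^sup>2 * \<mu>)"
    using cond_variance_F_le lam \<mu>(2) by (intro divide_right_mono) simp_all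
  also have "\<dots> = (?n * (\<Sum>y\<in>X. \<Sum>z\<in>X. weight y z) + ?k\<^sup>2 * (4 * real U * ?n / real p + 1))
      / (lam\<^sup>2 * ?k * ?n)"
    unfolding \<mu>(1) using p_pos lam card_B_pos X finite_X by (simp add: field_simps card_gt_0_iff)
  also have "\<dots> \<le> 100 * (real U * ln (real U)) * ?n / (lam\<^sup>2 * ?k * ?n)"
    using variance_numerator_le[OF X] lam \<mu> by (intro divide_right_mono) (simp_all add: zero_le_mult_iff)
  also have "\<dots> = 100 * (real U * ln (real U)) / (lam\<^sup>2 * ?k)"
    using card_B_pos by simp
  finally show ?thesis .
qed

end

theorem corollary4p2:
  shows "\<exists>C1 C2 :: real. \<forall>(U::nat) (k::nat) (X::nat set) (p::nat) (m::nat) (x::nat) (a::nat) (b::nat).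
    X \<subseteq> {..<U} \<and> card X = k \<and> prime p \<and> real p > 4 * real U ^ 2 \<and>
    0 < m \<and> m \<le> U \<and> x < U \<and> x \<notin> X \<and> a < m \<and> b < m \<longrightarrow>
    (let M = seed_pmf p;
         Ma = cond_pmf M {st. hash_fn p m st x = a};
         F = bucket_load p m X b;
         EF = measure_pmf.expectation M F
     in measure_pmf.expectation Ma F = EF
        \<and> \<bar>EF - real k / real m\<bar> \<le> C1
        \<and> (\<forall>lam::real. lam > 0 \<and> k > 0 \<longrightarrow>
             measure_pmf.prob Ma {st. \<bar>F st - EF\<bar> \<ge> lam * sqrt EF}
               \<le> C2 * (real U * ln (real U)) / (lam^2 * real k)))"
  apply (rule exI[of _ 1], rule exI[of _ 100], intro allI impI)
  subgoal premises hyps for U k X p m x a b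
  proof -
    interpret affine_hash_bucket U p m x a b X
      using hyps by unfold_locales auto
    have "X \<noteq> {}" if "k > 0" using that hyps by auto
    then show ?thesis
      using hyps cond_expectation_F expectation_F expectation_F_close cond_deviation_prob_le
      unfolding Let_def cond_pmf_seed_pmf by auto
  qed
  done

end
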